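(* Let $A$ be a finite-dimensional associative superalgebra over an algebraically closed field $\mathbb{K}$ of characteristic zero whose product is not identically zero. Then $A$ does not admit simultaneously an even-symmetric structure and an odd-symmetric structure.
   Context: A superalgebra is a $\mathbb{Z}_2$-graded algebra $A=A_{\bar 0}\oplus A_{\bar 1}$ with $A_\alpha A_\beta\subseteq A_{\alpha+\beta}$; $|x|$ denotes the degree of a homogeneous element. A bilinear form $B$ on $A$ is even if $B(A_{\bar 0},A_{\bar 1})=B(A_{\bar 1},A_{\bar 0})=\{0\}$ and odd if $B(A_{\bar 0},A_{\bar 0})=B(A_{\bar 1},A_{\bar 1})=\{0\}$; supersymmetric if $B(x,y)=(-1)^{|x||y|}B(y,x)$ for homogeneous $x,y$; associative if $B(x.y,z)=B(x,y.z)$; non-degenerate if $B(x,A)=\{0\}$ implies $x=0$. An even-symmetric (resp. odd-symmetric) structure on $A$ is an even (resp. odd), supersymmetric, associative, non-degenerate bilinear form on $A$. *)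

theory Defs
  imports Main "HOL-Computational_Algebra.Polynomial"
begin

definition bilinear_product :: "('k::field \<Rightarrow> 'a::ab_group_add \<Rightarrow> 'a) \<Rightarrow> ('a \<Rightarrow> 'a \<Rightarrow> 'a) \<Rightarrow> bool" where
  "bilinear_product scale mul \<longleftrightarrow>
     (\<forall>x y z. mul (x + y) z = mul x z + mul y z) \<and>
     (\<forall>x y z. mul x (y + z) = mul x y + mul x z) \<and>
     (\<forall>c x y. mul (scale c x) y = scale c (mul x y)) \<and>
     (\<forall>c x y. mul x (scale c y) = scale c (mul x y))"

definition superalgebra ::
  "('k::field \<Rightarrow> 'a::ab_group_add \<Rightarrow> 'a) \<Rightarrow> ('a \<Rightarrow> 'a \<Rightarrow> 'a) \<Rightarrow> 'a set \<Rightarrow> 'a set \<Rightarrow> bool" where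
  "superalgebra scale mul A0 A1 \<longleftrightarrow>
     vector_space scale \<and>
     module.subspace scale A0 \<and> module.subspace scale A1 \<and>
     A0 \<inter> A1 = {0} \<and> (\<forall>x. \<exists>a\<in>A0. \<exists>b\<in>A1. x = a + b) \<and>
     bilinear_product scale mul \<and>
     (\<forall>x\<in>A0. \<forall>y\<in>A0. mul x y \<in> A0) \<and>
     (\<forall>x\<in>A0. \<forall>y\<in>A1. mul x y \<in> A1) \<and>
     (\<forall>x\<in>A1. \<forall>y\<in>A0. mul x y \<in> A1) \<and>
     (\<forall>x\<in>A1. \<forall>y\<in>A1. mul x y \<in> A0)"

definition finite_dimensional :: "('k::field \<Rightarrow> 'a::ab_group_add \<Rightarrow> 'a) \<Rightarrow> bool" where
  "finite_dimensional scale \<longleftrightarrow> (\<exists>S. finite S \<and> module.span scale S = UNIV)"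

definition associative_product :: "('a \<Rightarrow> 'a \<Rightarrow> 'a) \<Rightarrow> bool" where
  "associative_product mul \<longleftrightarrow> (\<forall>x y z. mul (mul x y) z = mul x (mul y z))"

definition bilinear_form :: "('k::field \<Rightarrow> 'a::ab_group_add \<Rightarrow> 'a) \<Rightarrow> ('a \<Rightarrow> 'a \<Rightarrow> 'k) \<Rightarrow> bool" where
  "bilinear_form scale B \<longleftrightarrow>
     (\<forall>x y z. B (x + y) z = B x z + B y z) \<and>
     (\<forall>x y z. B x (y + z) = B x y + B x z) \<and>
     (\<forall>c x y. B (scale c x) y = c * B x y) \<and>
     (\<forall>c x y. B x (scale c y) = c * B x y)"

definition even_form :: "'a set \<Rightarrow> 'a set \<Rightarrow> ('a \<Rightarrow> 'a \<Rightarrow> 'k::field) \<Rightarrow> bool" where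
  "even_form A0 A1 B \<longleftrightarrow> (\<forall>x\<in>A0. \<forall>y\<in>A1. B x y = 0 \<and> B y x = 0)"

definition odd_form :: "'a set \<Rightarrow> 'a set \<Rightarrow> ('a \<Rightarrow> 'a \<Rightarrow> 'k::field) \<Rightarrow> bool" where
  "odd_form A0 A1 B \<longleftrightarrow> (\<forall>x\<in>A0. \<forall>y\<in>A0. B x y = 0) \<and> (\<forall>x\<in>A1. \<forall>y\<in>A1. B x y = 0)"

definition supersymmetric :: "'a set \<Rightarrow> 'a set \<Rightarrow> ('a \<Rightarrow> 'a \<Rightarrow> 'k::field) \<Rightarrow> bool" where
  "supersymmetric A0 A1 B \<longleftrightarrow>
     (\<forall>x\<in>A0. \<forall>y\<in>A0. B x y = B y x) \<and>
     (\<forall>x\<in>A0. \<forall>y\<in>A1. B x y = B y x) \<and>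
     (\<forall>x\<in>A1. \<forall>y\<in>A0. B x y = B y x) \<and>
     (\<forall>x\<in>A1. \<forall>y\<in>A1. B x y = - B y x)"

definition associative_form :: "('a \<Rightarrow> 'a \<Rightarrow> 'a) \<Rightarrow> ('a \<Rightarrow> 'a \<Rightarrow> 'k::field) \<Rightarrow> bool" where
  "associative_form mul B \<longleftrightarrow> (\<forall>x y z. B (mul x y) z = B x (mul y z))"

definition nondegenerate_form :: "('a::zero \<Rightarrow> 'a \<Rightarrow> 'k::field) \<Rightarrow> bool" where
  "nondegenerate_form B \<longleftrightarrow> (\<forall>x. (\<forall>y. B x y = 0) \<longrightarrow> x = 0)"

definition even_symmetric_structure where
  "even_symmetric_structure scale mul A0 A1 B \<longleftrightarrow>
     bilinear_form scale B \<and> even_form A0 A1 B \<and> supersymmetric A0 A1 B \<and>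
     associative_form mul B \<and> nondegenerate_form B"

definition odd_symmetric_structure where
  "odd_symmetric_structure scale mul A0 A1 B \<longleftrightarrow>
     bilinear_form scale B \<and> odd_form A0 A1 B \<and> supersymmetric A0 A1 B \<and>
     associative_form mul B \<and> nondegenerate_form B"

end

theory Submission
  imports Defs
begin

text \<open>Since both forms are non-degenerate, the odd form is B'(x,y) = B(D x, y) for an
  invertible operator D. Associativity of both forms makes D a left multiplier,
  D(xy) = (D x) y, and it swaps the parity. The odd form is genuinely symmetric while the
  even one is supersymmetric; comparing the two gives x (D y) = (-1)^|x| (D x) y. Computing
  (D x)(D y) in two ways then yields (D (D x)) y = -(D (D x)) y, so (D (D x)) y = 0 in
  characteristic zero, and D \<circ> D is onto.\<close>

lemma bilinear_form_add_left: "bilinear_form scale B \<Longrightarrow> B (x + y) z = B x z + B y z"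
  and bilinear_form_add_right: "bilinear_form scale B \<Longrightarrow> B x (y + z) = B x y + B x z"
  and bilinear_form_scale_left: "bilinear_form scale B \<Longrightarrow> B (scale c x) y = c * B x y"
  and bilinear_form_scale_right: "bilinear_form scale B \<Longrightarrow> B x (scale c y) = c * B x y"
  unfolding bilinear_form_def by blast+

lemma bilinear_form_zero_left: "bilinear_form scale B \<Longrightarrow> B 0 y = 0"
  using bilinear_form_add_left[of scale B 0 0 y] by (metis add_0 add_cancel_left_right)

lemma bilinear_form_zero_right: "bilinear_form scale B \<Longrightarrow> B x 0 = 0"
  using bilinear_form_add_right[of scale B x 0 0] by (metis add_0 add_cancel_left_right)

lemma bilinear_form_minus_left: "bilinear_form scale B \<Longrightarrow> B (- x) y = - B x y"
  using bilinear_form_add_left[of scale B x "- x" y] bilinear_form_zero_left[of scale B y]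
  by (simp add: eq_neg_iff_add_eq_0 add.commute)

lemma bilinear_form_diff_left: "bilinear_form scale B \<Longrightarrow> B (x - x') y = B x y - B x' y"
  using bilinear_form_add_left[of scale B x' "x - x'" y] by (simp add: algebra_simps)

lemma nondegenerate_form_eqI:
  assumes "bilinear_form scale B" "nondegenerate_form B" "\<And>z. B a z = B b z"
  shows "a = b"
proof -
  have "\<forall>z. B (a - b) z = 0" using assms(3) bilinear_form_diff_left[OF assms(1)] by simp
  then show ?thesis using assms(2) unfolding nondegenerate_form_def by force
qed

lemma bilinear_product_add_left: "bilinear_product scale mul \<Longrightarrow> mul (x + y) z = mul x z + mul y z"
  unfolding bilinear_product_def by blast

context vector_space
begin

lemma bilinear_forms_agree_on_span:
  assumes "bilinear_form scale B" "bilinear_form scale B'"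
    and "\<forall>e\<in>S. B w e = B' x e" and "y \<in> span S"
  shows "B w y = B' x y"
  using assms(4)
proof (induction rule: span_induct)
  case base
  show ?case unfolding subspace_def
    by (simp add: bilinear_form_zero_right[OF assms(1)] bilinear_form_zero_right[OF assms(2)]
        bilinear_form_add_right[OF assms(1)] bilinear_form_add_right[OF assms(2)]
        bilinear_form_scale_right[OF assms(1)] bilinear_form_scale_right[OF assms(2)])
next
  case (step e)
  then show ?case using assms(3) by blast
qed

text \<open>The map w \<mapsto> \<Sum>e. B(w,e) e is injective by non-degeneracy, hence onto; a preimage
  of \<Sum>e. B'(x,e) e represents B'(x,-).\<close>
lemma nondegenerate_form_represents:
  assumes "finite S" "span S = UNIV"
    and B: "bilinear_form scale B" "nondegenerate_form B"
    and B': "bilinear_form scale B'"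
  shows "\<exists>D. \<forall>x y. B' x y = B (D x) y"
proof -
  obtain \<beta> where "\<beta> \<subseteq> S" and ind: "independent \<beta>" and "S \<subseteq> span \<beta>"
    using maximal_independent_subset[of S] by blast
  then have fin: "finite \<beta>" and sp: "span \<beta> = UNIV"
    using assms(1,2) finite_subset span_mono[of S "span \<beta>"] span_span by auto
  interpret F: finite_dimensional_vector_space scale \<beta>
    by unfold_locales (simp_all add: fin ind sp)
  have coeffs_zero: "\<forall>e\<in>\<beta>. u e = 0" if "(\<Sum>e\<in>\<beta>. scale (u e) e) = 0" for u
    using ind that dependent_finite[OF fin] by blast
  define T where "T w = (\<Sum>e\<in>\<beta>. scale (B w e) e)" for w
  have lin: "Vector_Spaces.linear scale scale T"
    unfolding Vector_Spaces.linear_iff T_def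
    by (simp add: vector_space_axioms bilinear_form_add_left[OF B(1)]
        bilinear_form_scale_left[OF B(1)] scale_left_distrib sum.distrib scale_sum_right)
  interpret L: Vector_Spaces.linear scale scale T by (rule lin)
  have "inj T"
    unfolding L.inj_iff_eq_0
  proof (intro allI impI)
    fix w assume "T w = 0"
    then have "\<forall>e\<in>\<beta>. B w e = B' 0 e" using coeffs_zero[of "B w"]
      by (simp add: T_def bilinear_form_zero_left[OF B'])
    then have "B w y = B' 0 y" for y
      using bilinear_forms_agree_on_span[OF B(1) B', of \<beta> w 0 y] sp by simp
    then have "\<forall>y. B w y = 0" by (simp add: bilinear_form_zero_left[OF B'])
    then show "w = 0" using B(2) unfolding nondegenerate_form_def by simp
  qed
  then have T_onto: "surj T" using F.linear_inj_imp_surj[OF lin] by blast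
  have "\<exists>w. \<forall>y. B' x y = B w y" for x
  proof -
    obtain w where "T w = (\<Sum>e\<in>\<beta>. scale (B' x e) e)" using T_onto by (metis surjD)
    then have "(\<Sum>e\<in>\<beta>. scale (B w e - B' x e) e) = 0"
      unfolding T_def by (simp add: scale_left_diff_distrib sum_subtractf)
    then have "\<forall>e\<in>\<beta>. B w e = B' x e" using coeffs_zero[of "\<lambda>e. B w e - B' x e"] by simp
    then have "B' x y = B w y" for y
      using bilinear_forms_agree_on_span[OF B(1) B', of \<beta> w x y] sp by simp
    then show ?thesis by blast
  qed
  then show ?thesis by metis
qed

lemma eq_neg_imp_zero:
  fixes v :: 'b
  assumes "(2::'a) \<noteq> 0" and "v = - v"
  shows "v = 0"
proof -
  have "scale (1 + 1) v = v + v" by (simp only: scale_left_distrib scale_one)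
  also have "\<dots> = 0" using assms(2) by (metis add.right_inverse)
  finally show ?thesis using assms(1) by (simp add: one_add_one)
qed

end

lemma supersymmetricD:
  assumes "supersymmetric A0 A1 B"
  shows "x \<in> A0 \<Longrightarrow> y \<in> A0 \<Longrightarrow> B x y = B y x"
    and "x \<in> A0 \<Longrightarrow> y \<in> A1 \<Longrightarrow> B x y = B y x"
    and "x \<in> A1 \<Longrightarrow> y \<in> A0 \<Longrightarrow> B x y = B y x"
    and "x \<in> A1 \<Longrightarrow> y \<in> A1 \<Longrightarrow> B x y = - B y x"
  using assms unfolding supersymmetric_def by blast+

lemma even_formD:
  assumes "even_form A0 A1 B" "x \<in> A0" "y \<in> A1"
  shows "B x y = 0" and "B y x = 0"
  using assms unfolding even_form_def by blast+

lemma odd_formD: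
  assumes "odd_form A0 A1 B"
  shows "x \<in> A0 \<Longrightarrow> y \<in> A0 \<Longrightarrow> B x y = 0"
    and "x \<in> A1 \<Longrightarrow> y \<in> A1 \<Longrightarrow> B x y = 0"
  using assms unfolding odd_form_def by blast+

lemma even_supersymmetric_commute:
  assumes decomp: "\<forall>x. \<exists>a\<in>A0. \<exists>b\<in>A1. x = a + b"
    and B: "bilinear_form scale B" "even_form A0 A1 B" "supersymmetric A0 A1 B"
  shows "x \<in> A0 \<Longrightarrow> B x v = B v x"
    and "x \<in> A1 \<Longrightarrow> B x v = - B v x"
proof -
  obtain a b where a: "a \<in> A0" and b: "b \<in> A1" and v: "v = a + b" using decomp by blast
  have split: "B x v = B x a + B x b" "B v x = B a x + B b x"
    unfolding v by (simp_all add: bilinear_form_add_left[OF B(1)] bilinear_form_add_right[OF B(1)])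
  show "x \<in> A0 \<Longrightarrow> B x v = B v x"
    using supersymmetricD(1,2)[OF B(3)] a b by (simp add: split)
  show "x \<in> A1 \<Longrightarrow> B x v = - B v x"
    using supersymmetricD(4)[OF B(3) _ b] even_formD[OF B(2) a] by (simp add: split)
qed

lemma odd_supersymmetric_symmetric:
  assumes decomp: "\<forall>x. \<exists>a\<in>A0. \<exists>b\<in>A1. x = a + b"
    and B: "bilinear_form scale B" "odd_form A0 A1 B" "supersymmetric A0 A1 B"
  shows "B x y = B y x"
proof -
  obtain a b where a: "a \<in> A0" and b: "b \<in> A1" and x: "x = a + b" using decomp by blast
  obtain c d where c: "c \<in> A0" and d: "d \<in> A1" and y: "y = c + d" using decomp by blast
  show ?thesis
    using odd_formD[OF B(2)] supersymmetricD(2,3)[OF B(3)] a b c d unfolding x y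
    by (simp add: bilinear_form_add_left[OF B(1)] bilinear_form_add_right[OF B(1)])
qed

locale even_odd_structures =
  fixes scale :: "'k::field_char_0 \<Rightarrow> 'a::ab_group_add \<Rightarrow> 'a"
    and mul :: "'a \<Rightarrow> 'a \<Rightarrow> 'a"
    and A0 A1 :: "'a set"
    and B B' :: "'a \<Rightarrow> 'a \<Rightarrow> 'k"
    and D :: "'a \<Rightarrow> 'a"
  assumes superalgebra: "superalgebra scale mul A0 A1"
    and even: "even_symmetric_structure scale mul A0 A1 B"
    and odd: "odd_symmetric_structure scale mul A0 A1 B'"
    and represents: "B' x y = B (D x) y"
begin

lemma
  shows bilinear_B: "bilinear_form scale B" and nondegenerate_B: "nondegenerate_form B"
    and even_B: "even_form A0 A1 B" and supersymmetric_B: "supersymmetric A0 A1 B"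
    and associative_B: "B (mul x y) z = B x (mul y z)"
    and bilinear_B': "bilinear_form scale B'" and odd_B': "odd_form A0 A1 B'"
    and supersymmetric_B': "supersymmetric A0 A1 B'"
    and associative_B': "B' (mul x y) z = B' x (mul y z)"
  using even odd unfolding even_symmetric_structure_def odd_symmetric_structure_def
    associative_form_def by blast+

lemmas bilinear_B_simps = bilinear_form_add_left[OF bilinear_B] bilinear_form_add_right[OF bilinear_B]
  bilinear_form_zero_left[OF bilinear_B] bilinear_form_minus_left[OF bilinear_B]

lemmas bilinear_B'_simps = bilinear_form_add_left[OF bilinear_B'] bilinear_form_minus_left[OF bilinear_B']

lemma decomposition: "\<forall>x. \<exists>a\<in>A0. \<exists>b\<in>A1. x = a + b"
  using superalgebra unfolding superalgebra_def by blast

lemma B_eqI: "(\<And>z. B a z = B b z) \<Longrightarrow> a = b"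
  using nondegenerate_form_eqI[OF bilinear_B nondegenerate_B] by blast

lemma D_add: "D (x + y) = D x + D y"
  by (rule B_eqI) (simp add: represents[symmetric] bilinear_B_simps bilinear_B'_simps)

lemma D_minus: "D (- x) = - D x"
  by (rule B_eqI) (simp add: represents[symmetric] bilinear_B_simps bilinear_B'_simps)

lemma D_mul_left: "D (mul x y) = mul (D x) y"
  by (rule B_eqI) (simp add: represents[symmetric] associative_B associative_B')

sublocale vector_space scale
  using superalgebra unfolding superalgebra_def by blast

lemma D_parity:
  shows D_even: "x \<in> A0 \<Longrightarrow> D x \<in> A1"
    and D_odd: "x \<in> A1 \<Longrightarrow> D x \<in> A0"
proof -
  obtain a b where a: "a \<in> A0" and b: "b \<in> A1" and Dx: "D x = a + b"
    using decomposition by blast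
  show "x \<in> A0 \<Longrightarrow> D x \<in> A1"
  proof -
    assume x: "x \<in> A0"
    have "a = 0"
    proof (rule B_eqI)
      fix y
      obtain c d where c: "c \<in> A0" and d: "d \<in> A1" and y: "y = c + d"
        using decomposition by blast
      have "B (D x) c = 0" using odd_formD(1)[OF odd_B' x c] by (simp add: represents)
      then show "B a y = B 0 y" using even_formD[OF even_B] a b c d unfolding y Dx
        by (simp add: bilinear_B_simps)
    qed
    then show ?thesis using Dx b by simp
  qed
  show "x \<in> A1 \<Longrightarrow> D x \<in> A0"
  proof -
    assume x: "x \<in> A1"
    have "b = 0"
    proof (rule B_eqI)
      fix y
      obtain c d where c: "c \<in> A0" and d: "d \<in> A1" and y: "y = c + d"
        using decomposition by blast
      have "B (D x) d = 0" using odd_formD(2)[OF odd_B' x d] by (simp add: represents)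
      then show "B b y = B 0 y" using even_formD[OF even_B] a b c d unfolding y Dx
        by (simp add: bilinear_B_simps)
    qed
    then show ?thesis using Dx a by simp
  qed
qed

lemma B_right_D:
  shows B_right_D_even: "x \<in> A0 \<Longrightarrow> B x (D w) = B (D x) w"
    and B_right_D_odd: "x \<in> A1 \<Longrightarrow> B x (D w) = - B (D x) w"
  using even_supersymmetric_commute[OF decomposition bilinear_B even_B supersymmetric_B]
    odd_supersymmetric_symmetric[OF decomposition bilinear_B' odd_B' supersymmetric_B']
  by (metis represents)+

lemma mul_right_D:
  shows mul_right_D_even: "x \<in> A0 \<Longrightarrow> mul x (D y) = mul (D x) y"
    and mul_right_D_odd: "x \<in> A1 \<Longrightarrow> mul x (D y) = - mul (D x) y"
proof -
  have "B (mul x (D y)) z = B x (D (mul y z))" for z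
    by (simp add: associative_B D_mul_left)
  then show "x \<in> A0 \<Longrightarrow> mul x (D y) = mul (D x) y"
    and "x \<in> A1 \<Longrightarrow> mul x (D y) = - mul (D x) y"
    by (auto intro!: B_eqI simp: B_right_D associative_B bilinear_B_simps)
qed

lemma mul_DD_left_zero: "mul (D (D x)) y = 0"
proof -
  have bp: "bilinear_product scale mul"
    using superalgebra unfolding superalgebra_def by blast
  have homogeneous: "mul (D (D x)) y = 0" if "x \<in> A0 \<or> x \<in> A1" for x
  proof -
    have "mul (D (D x)) y = - mul (D (D x)) y"
      using that
    proof
      assume x: "x \<in> A0"
      have "mul (D x) (D y) = mul (D (D x)) y"
        using D_mul_left mul_right_D_even[OF x] by metis
      then show ?thesis using mul_right_D_odd[OF D_even[OF x]] by simp
    next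
      assume x: "x \<in> A1"
      have "mul (D x) (D y) = - mul (D (D x)) y"
        using D_mul_left mul_right_D_odd[OF x] D_minus by metis
      then show ?thesis using mul_right_D_even[OF D_odd[OF x]] by simp
    qed
    then show ?thesis by (simp add: eq_neg_imp_zero)
  qed
  obtain a b where "a \<in> A0" "b \<in> A1" "x = a + b" using decomposition by blast
  then show ?thesis using homogeneous by (simp add: D_add bilinear_product_add_left[OF bp])
qed

end

theorem mainTheorem3:
  fixes scale :: "'k::{alg_closed_field, field_char_0} \<Rightarrow> 'a::ab_group_add \<Rightarrow> 'a"
    and mul :: "'a \<Rightarrow> 'a \<Rightarrow> 'a"
    and A0 A1 :: "'a set"
  assumes "superalgebra scale mul A0 A1"
    and "finite_dimensional scale"
    and "associative_product mul"
    and "\<exists>x y. mul x y \<noteq> 0"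
  shows "\<not> ((\<exists>B. even_symmetric_structure scale mul A0 A1 B) \<and>
             (\<exists>B'. odd_symmetric_structure scale mul A0 A1 B'))"
proof
  assume "(\<exists>B. even_symmetric_structure scale mul A0 A1 B) \<and>
             (\<exists>B'. odd_symmetric_structure scale mul A0 A1 B')"
  then obtain B B' where even: "even_symmetric_structure scale mul A0 A1 B"
    and odd: "odd_symmetric_structure scale mul A0 A1 B'" by blast
  interpret vector_space scale using assms(1) unfolding superalgebra_def by blast
  obtain S where "finite S" "span S = UNIV"
    using assms(2) unfolding finite_dimensional_def by blast
  note represents = nondegenerate_form_represents[OF \<open>finite S\<close> \<open>span S = UNIV\<close>]
  obtain D where D: "\<And>x y. B' x y = B (D x) y"
    using even odd represents unfolding even_symmetric_structure_def odd_symmetric_structure_def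
    by blast
  obtain E where E: "\<And>x y. B x y = B' (E x) y"
    using even odd represents unfolding even_symmetric_structure_def odd_symmetric_structure_def
    by blast
  interpret even_odd_structures scale mul A0 A1 B B' D
    by unfold_locales (use assms(1) even odd D in auto)
  have "D (E x) = x" for x by (rule B_eqI) (simp add: D[symmetric] E[symmetric])
  then have "mul u y = 0" for u y using mul_DD_left_zero[of "E (E u)" y] by simp
  then show False using assms(4) by blast
qed

end
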